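(* Let $n=n_{obs}+n_{mis}$ with $n_{obs}\ge2$, $n_{mis}\ge1$. Let $Y_1,\dots,Y_{n_{obs}}$ be i.i.d. $N(\mu,\sigma^2)$, with $\bar Y_{obs}$ their mean and $CSS=\sum_{i=1}^{n_{obs}}(Y_i-\bar Y_{obs})^2$. Fix a real $\nu_{prior}$ with $n_{obs}+\nu_{prior}>3$ and set $\nu_{PD}=\nu_{prior}+n_{obs}-1$. Posterior-draw (PD) multiple imputation with $D\ge1$ imputations is defined as follows: for each $d=1,\dots,D$, independently, draw $U_{PD,d}\sim\chi^2_{\nu_{PD}}$ and $Z_{PD,d}\sim N(0,1/n_{obs})$, set $\hat\sigma^2_{d}=CSS/U_{PD,d}$, $\hat\mu_d=\bar Y_{obs}+\hat\sigma_d Z_{PD,d}$, draw $Y_{imp,i,d}=\hat\mu_d+\hat\sigma_d Z_{imp,i,d}$ for $i=n_{obs}+1,\dots,n$ with $Z_{imp,i,d}$ i.i.d. $N(0,1)$ (all random variables independent of each other and of the data), and let $\hat\sigma^2_{SI,d}$ be the sample variance (divisor $n-1$) of the $n$ values $Y_1,\dots,Y_{n_{obs}},Y_{imp,n_{obs}+1,d},\dots,Y_{imp,n,d}$. Let $\hat\sigma^2_{MI,PD}=\frac1D\sum_{d=1}^D\hat\sigma^2_{SI,d}$. Then $$E(\hat\sigma^2_{MI,PD})-\sigma^2=-\sigma^2\frac{n_{mis}(\nu_{prior}-2)}{(n-1)(n_{obs}+\nu_{prior}-3)},$$ for every $D\ge1$. *)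

theory Defs
  imports "HOL-Probability.Probability"
begin

definition chi_squared_density :: "real \<Rightarrow> real \<Rightarrow> real" where
  "chi_squared_density k x =
     (if x > 0 then x powr (k / 2 - 1) * exp (- x / 2) / (2 powr (k / 2) * Gamma (k / 2)) else 0)"

datatype rv_label = Yv nat | Uv nat | ZPDv nat | Zimpv nat nat

definition sample_mean :: "nat \<Rightarrow> (nat \<Rightarrow> real) \<Rightarrow> real" where
  "sample_mean n v = (\<Sum>i=1..n. v i) / real n"

definition sample_var :: "nat \<Rightarrow> (nat \<Rightarrow> real) \<Rightarrow> real" where
  "sample_var n v = (\<Sum>i=1..n. (v i - sample_mean n v)\<^sup>2) / (real n - 1)"

definition sigma2_MI_PD :: "nat \<Rightarrow> nat \<Rightarrow> nat \<Rightarrow> (rv_label \<Rightarrow> real) \<Rightarrow> real" where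
  "sigma2_MI_PD n_obs n_mis D x =
     (let n = n_obs + n_mis;
          Ybar = sample_mean n_obs (\<lambda>i. x (Yv i));
          CSS = (\<Sum>i=1..n_obs. (x (Yv i) - Ybar)\<^sup>2);
          sig = (\<lambda>d. sqrt (CSS / x (Uv d)));
          mu = (\<lambda>d. Ybar + sig d * x (ZPDv d));
          vals = (\<lambda>d i. if i \<le> n_obs then x (Yv i) else mu d + sig d * x (Zimpv i d))
      in (\<Sum>d=1..D. sample_var n (vals d)) / real D)"

end

(*
  Split the completed sample of imputation d into its observed and imputed blocks.  With
  s_d^2 = CSS / U_d the pooled sum of squares becomes CSS + s_d^2 Q_d, where
  Q_d = sum_i (Z_imp,i,d - mean Z_imp,d)^2 + (n_obs n_mis / n) (Z_PD,d + mean Z_imp,d)^2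
  involves only the standard normal draws of imputation d.  The three factors CSS, 1/U_d and Q_d
  are independent, with expectations (n_obs - 1) sigma^2, 1 / (nu_PD - 2) and
  (n_mis - 1) + (n_obs n_mis / n)(1/n_obs + 1/n_mis) = n_mis.  Hence every single-imputation
  estimate has expectation (n_obs - 1) sigma^2 (1 + n_mis / (nu_PD - 2)) / (n - 1), and so does
  their average; the bias formula is the difference to sigma^2.
*)

theory Submission
  imports Defs
begin

definition mean_on :: "'i set \<Rightarrow> ('i \<Rightarrow> real) \<Rightarrow> real" where
  "mean_on A v = (\<Sum>i\<in>A. v i) / real (card A)"

definition sum_sq_dev :: "'i set \<Rightarrow> ('i \<Rightarrow> real) \<Rightarrow> real" where
  "sum_sq_dev A v = (\<Sum>i\<in>A. (v i - mean_on A v)\<^sup>2)"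

lemma mean_on_cong: "(\<And>i. i \<in> A \<Longrightarrow> v i = w i) \<Longrightarrow> mean_on A v = mean_on A w"
  by (simp add: mean_on_def)

lemma sum_sq_dev_cong: "(\<And>i. i \<in> A \<Longrightarrow> v i = w i) \<Longrightarrow> sum_sq_dev A v = sum_sq_dev A w"
  by (simp add: sum_sq_dev_def cong: mean_on_cong)

lemma mean_on_reindex: "inj_on f A \<Longrightarrow> mean_on (f ` A) v = mean_on A (\<lambda>i. v (f i))"
  by (simp add: mean_on_def sum.reindex card_image)

lemma sum_sq_dev_reindex: "inj_on f A \<Longrightarrow> sum_sq_dev (f ` A) v = sum_sq_dev A (\<lambda>i. v (f i))"
  by (simp add: sum_sq_dev_def mean_on_reindex sum.reindex)

lemma sum_sq_dev_eq:
  assumes "finite A" "A \<noteq> {}"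
  shows "sum_sq_dev A v = (\<Sum>i\<in>A. (v i)\<^sup>2) - (\<Sum>i\<in>A. v i)\<^sup>2 / real (card A)"
proof -
  define c where "c = mean_on A v"
  have "sum_sq_dev A v = (\<Sum>i\<in>A. (v i)\<^sup>2 + c\<^sup>2 - 2 * c * v i)"
    unfolding sum_sq_dev_def c_def by (intro sum.cong) (auto simp: power2_diff)
  also have "\<dots> = (\<Sum>i\<in>A. (v i)\<^sup>2) + card A * c\<^sup>2 - 2 * c * (\<Sum>i\<in>A. v i)"
    by (simp add: sum.distrib sum_subtractf sum_distrib_left)
  also have "\<dots> = (\<Sum>i\<in>A. (v i)\<^sup>2) - (\<Sum>i\<in>A. v i)\<^sup>2 / card A"
    using assms by (simp add: c_def mean_on_def field_simps power2_eq_square)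
  finally show ?thesis .
qed

lemma sum_sq_dev_nonneg: "sum_sq_dev A v \<ge> 0"
  by (simp add: sum_sq_dev_def sum_nonneg)

lemma mean_on_affine:
  assumes "finite A" "A \<noteq> {}"
  shows "mean_on A (\<lambda>i. c + s * v i) = c + s * mean_on A v"
  using assms by (simp add: mean_on_def sum.distrib sum_distrib_left field_simps)

lemma sum_sq_dev_affine:
  assumes "finite A" "A \<noteq> {}"
  shows "sum_sq_dev A (\<lambda>i. c + s * v i) = s\<^sup>2 * sum_sq_dev A v"
  using assms by (simp add: sum_sq_dev_def mean_on_affine sum_distrib_left power_mult_distrib
      flip: right_diff_distrib)

lemma sum_sq_dev_union:
  assumes "finite A" "finite B" "A \<noteq> {}" "B \<noteq> {}" "A \<inter> B = {}"
  shows "sum_sq_dev (A \<union> B) v = sum_sq_dev A v + sum_sq_dev B v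
      + real (card A) * real (card B) / real (card A + card B) * (mean_on A v - mean_on B v)\<^sup>2"
proof -
  define a b where "a = real (card A)" and "b = real (card B)"
  define SA SB where "SA = (\<Sum>i\<in>A. v i)" and "SB = (\<Sum>i\<in>B. v i)"
  have "a > 0" "b > 0" using assms by (auto simp: a_def b_def)
  then have "SA\<^sup>2 / a + SB\<^sup>2 / b - (SA + SB)\<^sup>2 / (a + b) = a * b / (a + b) * (SA / a - SB / b)\<^sup>2"
    by (simp add: divide_simps power2_eq_square) algebra
  then show ?thesis
    using assms
    by (simp add: sum_sq_dev_eq sum.union_disjoint card_Un_disjoint mean_on_def
        flip: a_def b_def SA_def SB_def)
qed

lemma sum_sq_dev_imputed:
  assumes "finite A" "finite B" "A \<noteq> {}" "B \<noteq> {}" "A \<inter> B = {}"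
  shows "sum_sq_dev (A \<union> B) (\<lambda>i. if i \<in> A then y i else (mean_on A y + s * z) + s * w i)
    = sum_sq_dev A y + s\<^sup>2 * (sum_sq_dev B w
        + real (card A) * real (card B) / real (card A + card B) * (z + mean_on B w)\<^sup>2)"
proof -
  define v where "v i = (if i \<in> A then y i else (mean_on A y + s * z) + s * w i)" for i
  have on_A: "sum_sq_dev A v = sum_sq_dev A y" "mean_on A v = mean_on A y"
    by (auto simp: v_def intro: sum_sq_dev_cong mean_on_cong)
  have "v i = (mean_on A y + s * z) + s * w i" if "i \<in> B" for i
    using that assms(5) by (auto simp: v_def)
  then have on_B: "sum_sq_dev B v = s\<^sup>2 * sum_sq_dev B w"
      "mean_on B v = mean_on A y + s * z + s * mean_on B w"
    using assms(2,4) by (simp_all add: sum_sq_dev_affine mean_on_affine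
        cong: sum_sq_dev_cong mean_on_cong)
  show ?thesis
    unfolding v_def[symmetric] sum_sq_dev_union[OF assms] on_A on_B
    by (simp add: power2_eq_square algebra_simps)
qed

lemma chi_squared_density_nonneg: "k > 0 \<Longrightarrow> chi_squared_density k x \<ge> 0"
  by (simp add: chi_squared_density_def Gamma_real_pos)

lemma borel_measurable_chi_squared_density[measurable]:
  "chi_squared_density k \<in> borel_measurable borel"
  unfolding chi_squared_density_def[abs_def] by measurable

lemma nn_integral_chi_squared_density:
  assumes "k > 0"
  shows "(\<integral>\<^sup>+x. chi_squared_density k x \<partial>lborel) = 1"
proof -
  define a where "a = k / 2"
  have a: "a > 0" and G: "Gamma a > 0" using assms by (simp_all add: a_def Gamma_real_pos)
  have rescaled: "2 * chi_squared_density k (2 * t)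
      = 1 / Gamma a * (indicator {0..} t * t powr (a - 1) / exp t)" for t
  proof (cases "t > 0")
    case True
    have "2 powr a = 2 powr (a - 1) * 2" using powr_add[of 2 "a - 1" 1] by simp
    with True show ?thesis
      by (simp add: chi_squared_density_def powr_mult exp_minus field_simps flip: a_def)
  qed (auto simp: chi_squared_density_def indicator_def)
  have "(\<integral>\<^sup>+x. chi_squared_density k x \<partial>lborel)
      = 2 * (\<integral>\<^sup>+t. chi_squared_density k (2 * t) \<partial>lborel)"
    using nn_integral_real_affine[of "\<lambda>x. ennreal (chi_squared_density k x)" 2 0] by simp
  also have "\<dots> = (\<integral>\<^sup>+t. ennreal (1 / Gamma a) * (indicator {0..} t * t powr (a - 1) / exp t) \<partial>lborel)"
  proof -
    have "ennreal (1 / Gamma a) * (indicator {0..} t * t powr (a - 1) / exp t)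
        = 2 * ennreal (chi_squared_density k (2 * t))" for t
      using assms G
      by (simp add: chi_squared_density_nonneg numeral_mult_ennreal rescaled flip: ennreal_mult)
    then show ?thesis by (simp add: nn_integral_cmult)
  qed
  also have "\<dots> = ennreal (1 / Gamma a) * ennreal (Gamma a)"
    by (simp add: nn_integral_cmult Gamma_conv_nn_integral_real[OF a])
  also have "\<dots> = 1"
    using G by (simp flip: ennreal_mult)
  finally show ?thesis .
qed

lemma chi_squared_density_divide_abs:
  assumes "k > 2"
  shows "chi_squared_density k x / \<bar>x\<bar> = chi_squared_density (k - 2) x / (k - 2)"
proof (cases "x > 0")
  case True
  define a where "a = k / 2"
  have a: "a > 1" using assms by (simp add: a_def)
  have "Gamma a = (a - 1) * Gamma (a - 1)"
    using Gamma_plus1[of "a - 1"] a by (simp add: nonpos_Ints_def)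
  moreover have "2 powr a = 2 powr (a - 1) * 2" using powr_add[of 2 "a - 1" 1] by simp
  moreover have "x powr (a - 1) = x powr (a - 2) * x" using powr_add[of x "a - 2" 1] True by simp
  moreover have "k / 2 = a" "(k - 2) / 2 = a - 1" "k - 2 = 2 * (a - 1)" by (simp_all add: a_def)
  ultimately show ?thesis
    using True a Gamma_real_pos[of "a - 1"]
    by (simp add: chi_squared_density_def diff_divide_distrib)
qed (simp add: chi_squared_density_def)

lemma (in prob_space) chi_squared_distributed_expectation_inverse:
  assumes k: "k > 2" and U: "distributed M lborel U (chi_squared_density k)"
  shows "integrable M (\<lambda>\<omega>. 1 / \<bar>U \<omega>\<bar>)" "expectation (\<lambda>\<omega>. 1 / \<bar>U \<omega>\<bar>) = 1 / (k - 2)"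
proof -
  have [measurable]: "U \<in> borel_measurable M" using distributed_measurable[OF U] by simp
  have "(\<integral>\<^sup>+\<omega>. 1 / \<bar>U \<omega>\<bar> \<partial>M) = (\<integral>\<^sup>+u. chi_squared_density k u * ennreal (1 / \<bar>u\<bar>) \<partial>lborel)"
    by (rule distributed_nn_integral[OF U, symmetric]) simp
  also have "\<dots> = (\<integral>\<^sup>+u. ennreal (1 / (k - 2)) * chi_squared_density (k - 2) u \<partial>lborel)"
    using k chi_squared_density_divide_abs[OF k]
    by (intro nn_integral_cong) (simp add: chi_squared_density_nonneg field_simps flip: ennreal_mult)
  also have "\<dots> = 1 / (k - 2)"
    using k by (simp add: nn_integral_cmult nn_integral_chi_squared_density)
  finally have "has_bochner_integral M (\<lambda>\<omega>. 1 / \<bar>U \<omega>\<bar>) (1 / (k - 2))"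
    using k by (intro has_bochner_integral_nn_integral) auto
  then show "integrable M (\<lambda>\<omega>. 1 / \<bar>U \<omega>\<bar>)" "expectation (\<lambda>\<omega>. 1 / \<bar>U \<omega>\<bar>) = 1 / (k - 2)"
    by (auto simp: has_bochner_integral_iff)
qed

lemma (in prob_space) normal_distributed_moments:
  assumes \<sigma>: "\<sigma> > 0" and X: "distributed M lborel X (normal_density \<mu> \<sigma>)"
  shows "integrable M X" "integrable M (\<lambda>\<omega>. (X \<omega>)\<^sup>2)"
    and "expectation X = \<mu>" "variance X = \<sigma>\<^sup>2"
proof -
  have "integrable M (\<lambda>\<omega>. (X \<omega> - \<mu>)\<^sup>2)"
    using distributed_integrable[OF X, of "\<lambda>x. (x - \<mu>)\<^sup>2"] integrable_normal_moment[OF \<sigma>, of \<mu> 2]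
    by simp
  moreover show "integrable M X"
    using distributed_integrable[OF X, of "\<lambda>x. x"] integrable_normal_moment_nz_1[OF \<sigma>, of \<mu>]
    by simp
  moreover have "(X \<omega>)\<^sup>2 = (X \<omega> - \<mu>)\<^sup>2 + 2 * \<mu> * X \<omega> - \<mu>\<^sup>2" for \<omega>
    by (simp add: power2_eq_square algebra_simps)
  ultimately show "integrable M (\<lambda>\<omega>. (X \<omega>)\<^sup>2)" by simp
  show "expectation X = \<mu>" "variance X = \<sigma>\<^sup>2"
    using normal_distributed_expectation[OF \<sigma> X] normal_distributed_variance[OF \<sigma> X] by simp_all
qed

lemma (in prob_space) expectation_square_sum_indep:
  fixes X :: "'i \<Rightarrow> 'a \<Rightarrow> real"
  assumes ind: "indep_vars (\<lambda>_. borel) X I" and J: "finite J" "J \<subseteq> I"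
    and int: "\<And>j. j \<in> J \<Longrightarrow> integrable M (X j)"
    and int_sq: "\<And>j. j \<in> J \<Longrightarrow> integrable M (\<lambda>\<omega>. (X j \<omega>)\<^sup>2)"
  shows "integrable M (\<lambda>\<omega>. (\<Sum>j\<in>J. a j * X j \<omega>)\<^sup>2)"
    and "expectation (\<lambda>\<omega>. (\<Sum>j\<in>J. a j * X j \<omega>)\<^sup>2)
      = (\<Sum>j\<in>J. a j * expectation (X j))\<^sup>2 + (\<Sum>j\<in>J. (a j)\<^sup>2 * variance (X j))"
proof -
  define m where "m j = expectation (X j)" for j
  define q where "q j = expectation (\<lambda>\<omega>. (X j \<omega>)\<^sup>2)" for j
  have products: "integrable M (\<lambda>\<omega>. X j \<omega> * X k \<omega>) \<and>
      expectation (\<lambda>\<omega>. X j \<omega> * X k \<omega>) = (if j = k then q j else m j * m k)"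
    if "j \<in> J" "k \<in> J" for j k
  proof (cases "j = k")
    case True
    then show ?thesis using int_sq[OF \<open>j \<in> J\<close>] by (simp add: q_def power2_eq_square)
  next
    case False
    have ind2: "indep_vars (\<lambda>_. borel) X {j, k}"
      by (rule indep_vars_subset[OF ind]) (use J that in auto)
    have int2: "\<And>i. i \<in> {j, k} \<Longrightarrow> integrable M (X i)" using int that by auto
    have "(\<lambda>\<omega>. X j \<omega> * X k \<omega>) = (\<lambda>\<omega>. \<Prod>i\<in>{j, k}. X i \<omega>)" using False by simp
    then show ?thesis
      using False indep_vars_integrable[OF _ ind2 int2] indep_vars_lebesgue_integral[OF _ ind2 int2]
      by (simp add: m_def)
  qed
  have square: "(\<Sum>j\<in>J. a j * X j \<omega>)\<^sup>2 = (\<Sum>j\<in>J. \<Sum>k\<in>J. (a j * a k) * (X j \<omega> * X k \<omega>))" for \<omega>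
    by (simp add: power2_eq_square sum_product algebra_simps)
  show "integrable M (\<lambda>\<omega>. (\<Sum>j\<in>J. a j * X j \<omega>)\<^sup>2)"
    unfolding square using products by auto
  have "expectation (\<lambda>\<omega>. (\<Sum>j\<in>J. a j * X j \<omega>)\<^sup>2)
      = (\<Sum>j\<in>J. \<Sum>k\<in>J. (a j * a k) * (if j = k then q j else m j * m k))"
    unfolding square using products by (simp add: Bochner_Integration.integral_sum integrable_sum)
  also have "\<dots> = (\<Sum>j\<in>J. \<Sum>k\<in>J. (a j * m j) * (a k * m k) + (if j = k then (a j)\<^sup>2 * (q j - (m j)\<^sup>2) else 0))"
    by (intro sum.cong refl) (auto simp: power2_eq_square algebra_simps)
  also have "\<dots> = (\<Sum>j\<in>J. a j * m j)\<^sup>2 + (\<Sum>j\<in>J. (a j)\<^sup>2 * (q j - (m j)\<^sup>2))"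
    using J by (simp add: sum.distrib power2_eq_square sum_product)
  finally show "expectation (\<lambda>\<omega>. (\<Sum>j\<in>J. a j * X j \<omega>)\<^sup>2)
      = (\<Sum>j\<in>J. a j * expectation (X j))\<^sup>2 + (\<Sum>j\<in>J. (a j)\<^sup>2 * variance (X j))"
    using int int_sq by (simp add: m_def q_def variance_eq)
qed

lemma (in prob_space) expectation_sum_sq_dev_indep:
  fixes X :: "'i \<Rightarrow> 'a \<Rightarrow> real"
  assumes ind: "indep_vars (\<lambda>_. borel) X I" and J: "finite J" "J \<subseteq> I" "J \<noteq> {}"
    and int: "\<And>j. j \<in> J \<Longrightarrow> integrable M (X j)"
    and int_sq: "\<And>j. j \<in> J \<Longrightarrow> integrable M (\<lambda>\<omega>. (X j \<omega>)\<^sup>2)"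
    and mean: "\<And>j. j \<in> J \<Longrightarrow> expectation (X j) = \<mu>"
    and var: "\<And>j. j \<in> J \<Longrightarrow> variance (X j) = v"
  shows "integrable M (\<lambda>\<omega>. sum_sq_dev J (\<lambda>j. X j \<omega>))"
    and "expectation (\<lambda>\<omega>. sum_sq_dev J (\<lambda>j. X j \<omega>)) = (real (card J) - 1) * v"
proof -
  note square_sum = expectation_square_sum_indep[OF ind J(1,2) int int_sq, where a="\<lambda>_. 1", simplified]
  have second_moment: "expectation (\<lambda>\<omega>. (X j \<omega>)\<^sup>2) = \<mu>\<^sup>2 + v" if "j \<in> J" for j
    using variance_eq[OF int int_sq, of j] mean var that by simp
  have dev: "sum_sq_dev J (\<lambda>j. X j \<omega>) = (\<Sum>j\<in>J. (X j \<omega>)\<^sup>2) - (\<Sum>j\<in>J. X j \<omega>)\<^sup>2 / real (card J)" for \<omega>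
    using J by (simp add: sum_sq_dev_eq)
  show "integrable M (\<lambda>\<omega>. sum_sq_dev J (\<lambda>j. X j \<omega>))"
    unfolding dev using square_sum(1) int_sq by auto
  have "expectation (\<lambda>\<omega>. sum_sq_dev J (\<lambda>j. X j \<omega>))
      = real (card J) * (\<mu>\<^sup>2 + v) - ((real (card J) * \<mu>)\<^sup>2 + real (card J) * v) / real (card J)"
    unfolding dev using square_sum int_sq mean var second_moment
    by (simp add: Bochner_Integration.integral_sum integrable_sum)
  also have "\<dots> = (real (card J) - 1) * v"
    using J by (simp add: field_simps power2_eq_square)
  finally show "expectation (\<lambda>\<omega>. sum_sq_dev J (\<lambda>j. X j \<omega>)) = (real (card J) - 1) * v" .
qed

lemma (in prob_space) indep_vars_expectation_mult:
  fixes X :: "'i \<Rightarrow> 'a \<Rightarrow> real" and f g :: "('i \<Rightarrow> real) \<Rightarrow> real"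
  assumes ind: "indep_vars (\<lambda>_. borel) X I" and AB: "A \<inter> B = {}" "A \<subseteq> I" "B \<subseteq> I"
    and f: "f \<in> borel_measurable (Pi\<^sub>M A (\<lambda>_. borel))" "\<And>x. f (restrict x A) = f x"
    and g: "g \<in> borel_measurable (Pi\<^sub>M B (\<lambda>_. borel))" "\<And>x. g (restrict x B) = g x"
    and int: "integrable M (\<lambda>\<omega>. f (\<lambda>i. X i \<omega>))" "integrable M (\<lambda>\<omega>. g (\<lambda>i. X i \<omega>))"
  shows "integrable M (\<lambda>\<omega>. f (\<lambda>i. X i \<omega>) * g (\<lambda>i. X i \<omega>))"
    and "expectation (\<lambda>\<omega>. f (\<lambda>i. X i \<omega>) * g (\<lambda>i. X i \<omega>))
      = expectation (\<lambda>\<omega>. f (\<lambda>i. X i \<omega>)) * expectation (\<lambda>\<omega>. g (\<lambda>i. X i \<omega>))"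
proof -
  have "indep_var borel (\<lambda>\<omega>. f (restrict (\<lambda>i. X i \<omega>) A)) borel (\<lambda>\<omega>. g (restrict (\<lambda>i. X i \<omega>) B))"
    using indep_var_compose[OF indep_var_restrict[OF ind AB] f(1) g(1)] by (simp add: comp_def)
  then have "indep_var borel (\<lambda>\<omega>. f (\<lambda>i. X i \<omega>)) borel (\<lambda>\<omega>. g (\<lambda>i. X i \<omega>))"
    by (simp only: f(2) g(2))
  then show "integrable M (\<lambda>\<omega>. f (\<lambda>i. X i \<omega>) * g (\<lambda>i. X i \<omega>))"
    and "expectation (\<lambda>\<omega>. f (\<lambda>i. X i \<omega>) * g (\<lambda>i. X i \<omega>))
      = expectation (\<lambda>\<omega>. f (\<lambda>i. X i \<omega>)) * expectation (\<lambda>\<omega>. g (\<lambda>i. X i \<omega>))"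
    using indep_var_integrable indep_var_lebesgue_integral int by blast+
qed

lemma sample_mean_eq_mean_on: "sample_mean n v = mean_on {1..n} v"
  by (simp add: sample_mean_def mean_on_def)

lemma sample_var_eq_sum_sq_dev: "sample_var n v = sum_sq_dev {1..n} v / (real n - 1)"
  by (simp add: sample_var_def sum_sq_dev_def sample_mean_eq_mean_on)

definition obs_css :: "nat \<Rightarrow> (rv_label \<Rightarrow> real) \<Rightarrow> real" where
  "obs_css n_obs x = sum_sq_dev {1..n_obs} (\<lambda>i. x (Yv i))"

definition imputation_spread :: "nat \<Rightarrow> nat \<Rightarrow> nat \<Rightarrow> (rv_label \<Rightarrow> real) \<Rightarrow> real" where
  "imputation_spread n_obs n_mis d x =
     sum_sq_dev {n_obs+1..n_obs+n_mis} (\<lambda>i. x (Zimpv i d))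
     + real n_obs * real n_mis / real (n_obs + n_mis)
       * (x (ZPDv d) + mean_on {n_obs+1..n_obs+n_mis} (\<lambda>i. x (Zimpv i d)))\<^sup>2"

lemma sigma2_MI_PD_eq:
  assumes "n_obs \<ge> 1" "n_mis \<ge> 1"
  shows "sigma2_MI_PD n_obs n_mis D x = (\<Sum>d=1..D.
      obs_css n_obs x * (1 + imputation_spread n_obs n_mis d x / \<bar>x (Uv d)\<bar>)
        / (real (n_obs + n_mis) - 1)) / real D"
proof -
  let ?A = "{1..n_obs}" and ?B = "{n_obs+1..n_obs+n_mis}"
  define Ybar where "Ybar = mean_on ?A (\<lambda>i. x (Yv i))"
  define sig where "sig d = sqrt (obs_css n_obs x / x (Uv d))" for d
  have split: "{1..n_obs + n_mis} = ?A \<union> ?B" by auto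
  have sig_sq: "(sig d)\<^sup>2 = obs_css n_obs x / \<bar>x (Uv d)\<bar>" for d
  proof -
    \<comment> \<open>\<open>sqrt\<close> is odd on negative arguments, so \<open>|U|\<close> appears and no \<open>U > 0\<close> a.s. is needed\<close>
    have "(sqrt t)\<^sup>2 = \<bar>t\<bar>" for t :: real
      by (metis real_sqrt_abs real_sqrt_mult_self power2_eq_square real_sqrt_abs2)
    then show ?thesis by (simp add: sig_def obs_css_def abs_div abs_of_nonneg sum_sq_dev_nonneg)
  qed
  have per_draw: "sample_var (n_obs + n_mis)
      (\<lambda>i. if i \<le> n_obs then x (Yv i) else (Ybar + sig d * x (ZPDv d)) + sig d * x (Zimpv i d))
    = obs_css n_obs x * (1 + imputation_spread n_obs n_mis d x / \<bar>x (Uv d)\<bar>)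
        / (real (n_obs + n_mis) - 1)" for d
  proof -
    have "sum_sq_dev (?A \<union> ?B)
        (\<lambda>i. if i \<le> n_obs then x (Yv i) else (Ybar + sig d * x (ZPDv d)) + sig d * x (Zimpv i d))
      = sum_sq_dev (?A \<union> ?B)
        (\<lambda>i. if i \<in> ?A then x (Yv i) else (Ybar + sig d * x (ZPDv d)) + sig d * x (Zimpv i d))"
      by (rule sum_sq_dev_cong) auto
    also have "\<dots> = obs_css n_obs x + (sig d)\<^sup>2 * imputation_spread n_obs n_mis d x"
      using assms unfolding Ybar_def
      by (subst sum_sq_dev_imputed) (auto simp: obs_css_def imputation_spread_def)
    finally show ?thesis
      unfolding sample_var_eq_sum_sq_dev split sig_sq by (simp add: algebra_simps)
  qed
  have css: "(\<Sum>i=1..n_obs. (x (Yv i) - sample_mean n_obs (\<lambda>i. x (Yv i)))\<^sup>2) = obs_css n_obs x"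
    by (simp add: obs_css_def sum_sq_dev_def sample_mean_eq_mean_on)
  have mean: "sample_mean n_obs (\<lambda>i. x (Yv i)) = Ybar"
    by (simp add: Ybar_def sample_mean_eq_mean_on)
  show ?thesis
    unfolding sigma2_MI_PD_def Let_def css by (simp only: mean per_draw[unfolded sig_def])
qed

lemma obs_css_restrict: "Yv ` {1..n_obs} \<subseteq> A \<Longrightarrow> obs_css n_obs (restrict x A) = obs_css n_obs x"
  unfolding obs_css_def by (rule sum_sq_dev_cong) (auto simp: image_subset_iff)

lemma imputation_spread_restrict:
  assumes "insert (ZPDv d) ((\<lambda>i. Zimpv i d) ` {n_obs+1..n_obs+n_mis}) \<subseteq> A"
  shows "imputation_spread n_obs n_mis d (restrict x A) = imputation_spread n_obs n_mis d x"
proof -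
  let ?K = "{n_obs+1..n_obs+n_mis}"
  have "restrict x A (Zimpv i d) = x (Zimpv i d)" if "i \<in> ?K" for i
    using assms that by (auto simp: image_subset_iff)
  then have "sum_sq_dev ?K (\<lambda>i. restrict x A (Zimpv i d)) = sum_sq_dev ?K (\<lambda>i. x (Zimpv i d))"
    "mean_on ?K (\<lambda>i. restrict x A (Zimpv i d)) = mean_on ?K (\<lambda>i. x (Zimpv i d))"
    by (blast intro: sum_sq_dev_cong mean_on_cong)+
  then show ?thesis
    using assms by (simp add: imputation_spread_def)
qed

lemma measurable_mean_on_PiM:
  "lab ` J \<subseteq> A \<Longrightarrow> (\<lambda>x. mean_on J (\<lambda>j. x (lab j))) \<in> borel_measurable (Pi\<^sub>M A (\<lambda>_. borel))"
  unfolding mean_on_def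
  by (intro borel_measurable_divide borel_measurable_sum borel_measurable_const
      measurable_component_singleton) auto

lemma measurable_sum_sq_dev_PiM:
  "lab ` J \<subseteq> A \<Longrightarrow> (\<lambda>x. sum_sq_dev J (\<lambda>j. x (lab j))) \<in> borel_measurable (Pi\<^sub>M A (\<lambda>_. borel))"
  unfolding sum_sq_dev_def
  by (intro borel_measurable_sum borel_measurable_power borel_measurable_diff
      measurable_mean_on_PiM measurable_component_singleton) auto

lemma measurable_obs_css:
  "Yv ` {1..n_obs} \<subseteq> A \<Longrightarrow> obs_css n_obs \<in> borel_measurable (Pi\<^sub>M A (\<lambda>_. borel))"
  unfolding obs_css_def[abs_def] by (rule measurable_sum_sq_dev_PiM)

lemma measurable_imputation_spread:
  "insert (ZPDv d) ((\<lambda>i. Zimpv i d) ` {n_obs+1..n_obs+n_mis}) \<subseteq> A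
    \<Longrightarrow> imputation_spread n_obs n_mis d \<in> borel_measurable (Pi\<^sub>M A (\<lambda>_. borel))"
  unfolding imputation_spread_def[abs_def]
  by (intro borel_measurable_add borel_measurable_times borel_measurable_power borel_measurable_const
      measurable_sum_sq_dev_PiM measurable_mean_on_PiM measurable_component_singleton) auto

definition pd_labels :: "nat \<Rightarrow> nat \<Rightarrow> nat \<Rightarrow> rv_label set" where
  "pd_labels n_obs n_mis D =
     {Yv i | i. i \<in> {1..n_obs}} \<union> {Uv d | d. d \<in> {1..D}} \<union> {ZPDv d | d. d \<in> {1..D}}
     \<union> {Zimpv i d | i d. i \<in> {n_obs+1..n_obs+n_mis} \<and> d \<in> {1..D}}"

locale pd_imputation = prob_space M
  for M :: "'a measure" and X :: "rv_label \<Rightarrow> 'a \<Rightarrow> real"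
    and n_obs n_mis D :: nat and \<mu> \<sigma> \<nu>_prior :: real +
  assumes n_obs: "n_obs \<ge> 2" and n_mis: "n_mis \<ge> 1" and \<sigma>: "\<sigma> > 0"
    and \<nu>_prior: "real n_obs + \<nu>_prior > 3"
    and indep: "indep_vars (\<lambda>_. borel) X (pd_labels n_obs n_mis D)"
    and Y: "\<And>i. i \<in> {1..n_obs} \<Longrightarrow> distributed M lborel (X (Yv i)) (normal_density \<mu> \<sigma>)"
    and U: "\<And>d. d \<in> {1..D} \<Longrightarrow>
      distributed M lborel (X (Uv d)) (chi_squared_density (\<nu>_prior + real n_obs - 1))"
    and Z_PD: "\<And>d. d \<in> {1..D} \<Longrightarrow>
      distributed M lborel (X (ZPDv d)) (normal_density 0 (1 / sqrt (real n_obs)))"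
    and Z_imp: "\<And>i d. i \<in> {n_obs+1..n_obs+n_mis} \<Longrightarrow> d \<in> {1..D} \<Longrightarrow>
      distributed M lborel (X (Zimpv i d)) (normal_density 0 1)"
begin

lemma obs_css_expectation:
  shows "integrable M (\<lambda>\<omega>. obs_css n_obs (\<lambda>l. X l \<omega>))"
    and "expectation (\<lambda>\<omega>. obs_css n_obs (\<lambda>l. X l \<omega>)) = (real n_obs - 1) * \<sigma>\<^sup>2"
proof -
  let ?J = "Yv ` {1..n_obs}"
  have css: "obs_css n_obs (\<lambda>l. X l \<omega>) = sum_sq_dev ?J (\<lambda>l. X l \<omega>)" for \<omega>
    by (simp add: obs_css_def sum_sq_dev_reindex inj_on_def)
  have J: "finite ?J" "?J \<subseteq> pd_labels n_obs n_mis D" "?J \<noteq> {}" "card ?J = n_obs"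
    using n_obs by (auto simp: pd_labels_def card_image inj_on_def)
  note moments = normal_distributed_moments[OF \<sigma> Y]
  have "integrable M (X j)" "integrable M (\<lambda>\<omega>. (X j \<omega>)\<^sup>2)" "expectation (X j) = \<mu>"
    "variance (X j) = \<sigma>\<^sup>2" if "j \<in> ?J" for j
    using that moments by auto
  note css_moments = expectation_sum_sq_dev_indep[OF indep J(1-3) this]
  show "integrable M (\<lambda>\<omega>. obs_css n_obs (\<lambda>l. X l \<omega>))"
    and "expectation (\<lambda>\<omega>. obs_css n_obs (\<lambda>l. X l \<omega>)) = (real n_obs - 1) * \<sigma>\<^sup>2"
    unfolding css using css_moments J(4) by simp_all
qed

lemma imputation_spread_expectation:
  assumes d: "d \<in> {1..D}"
  shows "integrable M (\<lambda>\<omega>. imputation_spread n_obs n_mis d (\<lambda>l. X l \<omega>))"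
    and "expectation (\<lambda>\<omega>. imputation_spread n_obs n_mis d (\<lambda>l. X l \<omega>)) = real n_mis"
proof -
  let ?K = "{n_obs+1..n_obs+n_mis}"
  let ?W = "(\<lambda>i. Zimpv i d) ` ?K"
  let ?J = "insert (ZPDv d) ?W"
  define a where "a l = (if l = ZPDv d then 1 else 1 / real n_mis)" for l
  have W: "finite ?W" "?W \<subseteq> pd_labels n_obs n_mis D" "?W \<noteq> {}" "card ?W = n_mis"
    using d n_mis by (auto simp: pd_labels_def card_image inj_on_def)
  have J: "finite ?J" "?J \<subseteq> pd_labels n_obs n_mis D" "ZPDv d \<notin> ?W"
    using d W by (auto simp: pd_labels_def)
  have sd: "1 / sqrt (real n_obs) > 0" "(1 / sqrt (real n_obs))\<^sup>2 = 1 / real n_obs"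
    using n_obs by (simp_all add: power_divide)
  note Z_moments = normal_distributed_moments[OF sd(1) Z_PD[OF d], unfolded sd(2)]
  have W_moments: "integrable M (X j)" "integrable M (\<lambda>\<omega>. (X j \<omega>)\<^sup>2)" "expectation (X j) = 0"
    "variance (X j) = 1" "expectation (\<lambda>\<omega>. (X j \<omega>)\<^sup>2) = 1" if "j \<in> ?W" for j
    using that normal_distributed_moments[OF zero_less_one Z_imp[OF _ d]] by auto
  have J_moments: "integrable M (X j)" "integrable M (\<lambda>\<omega>. (X j \<omega>)\<^sup>2)" if "j \<in> ?J" for j
    using that Z_moments W_moments by auto
  note dev_moments = expectation_sum_sq_dev_indep[OF indep W(1-3) W_moments(1-4)]
  note square_moments = expectation_square_sum_indep[OF indep J(1,2) J_moments, of a]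
  have "(\<Sum>l\<in>?J. a l * expectation (X l)) = 0"
    using J(1,3) Z_moments W_moments by simp
  moreover have "(\<Sum>l\<in>?J. (a l)\<^sup>2 * variance (X l)) = 1 / real n_obs + 1 / real n_mis"
  proof -
    have "(\<Sum>l\<in>?W. (a l)\<^sup>2 * variance (X l)) = (\<Sum>l\<in>?W. 1 / (real n_mis)\<^sup>2)"
      by (rule sum.cong) (auto simp: a_def W_moments power_divide)
    then show ?thesis
      using J(1,3) W(4) Z_moments n_mis by (simp add: a_def power2_eq_square)
  qed
  ultimately have square_expectation:
    "expectation (\<lambda>\<omega>. (\<Sum>l\<in>?J. a l * X l \<omega>)\<^sup>2) = 1 / real n_obs + 1 / real n_mis"
    using square_moments(2) by simp
  have spread: "imputation_spread n_obs n_mis d (\<lambda>l. X l \<omega>) = sum_sq_dev ?W (\<lambda>l. X l \<omega>)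
      + real n_obs * real n_mis / real (n_obs + n_mis) * (\<Sum>l\<in>?J. a l * X l \<omega>)\<^sup>2" for \<omega>
  proof -
    have "(\<Sum>l\<in>?J. a l * X l \<omega>) = X (ZPDv d) \<omega> + mean_on ?K (\<lambda>i. X (Zimpv i d) \<omega>)"
      using J(1,3) by (simp add: a_def mean_on_def sum.reindex inj_on_def sum_divide_distrib)
    then show ?thesis
      by (simp add: imputation_spread_def sum_sq_dev_reindex inj_on_def)
  qed
  show "integrable M (\<lambda>\<omega>. imputation_spread n_obs n_mis d (\<lambda>l. X l \<omega>))"
    unfolding spread using dev_moments(1) square_moments(1) by simp
  have "expectation (\<lambda>\<omega>. imputation_spread n_obs n_mis d (\<lambda>l. X l \<omega>))
      = (real n_mis - 1) + real n_obs * real n_mis / real (n_obs + n_mis) * (1 / real n_obs + 1 / real n_mis)"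
    unfolding spread using dev_moments square_moments(1) square_expectation W(4) by simp
  also have "\<dots> = real n_mis"
    using n_obs n_mis by (simp add: divide_simps) (simp add: algebra_simps)
  finally show "expectation (\<lambda>\<omega>. imputation_spread n_obs n_mis d (\<lambda>l. X l \<omega>)) = real n_mis" .
qed

lemma imputed_css_expectation:
  assumes d: "d \<in> {1..D}"
  shows "integrable M (\<lambda>\<omega>. obs_css n_obs (\<lambda>l. X l \<omega>)
      * (1 + imputation_spread n_obs n_mis d (\<lambda>l. X l \<omega>) / \<bar>X (Uv d) \<omega>\<bar>))"
    and "expectation (\<lambda>\<omega>. obs_css n_obs (\<lambda>l. X l \<omega>)
      * (1 + imputation_spread n_obs n_mis d (\<lambda>l. X l \<omega>) / \<bar>X (Uv d) \<omega>\<bar>))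
      = (real n_obs - 1) * \<sigma>\<^sup>2 * (1 + real n_mis / (real n_obs + \<nu>_prior - 3))"
proof -
  let ?A = "Yv ` {1..n_obs}"
  let ?B = "insert (ZPDv d) ((\<lambda>i. Zimpv i d) ` {n_obs+1..n_obs+n_mis})"
  let ?C = "insert (Uv d) ?B"
  define r where "r x = 1 / \<bar>x (Uv d)\<bar>" for x :: "rv_label \<Rightarrow> real"
  define g where "g x = 1 + r x * imputation_spread n_obs n_mis d x" for x
  have sets: "{Uv d} \<inter> ?B = {}" "{Uv d} \<subseteq> pd_labels n_obs n_mis D" "?B \<subseteq> pd_labels n_obs n_mis D"
    "?A \<inter> ?C = {}" "?A \<subseteq> pd_labels n_obs n_mis D" "?C \<subseteq> pd_labels n_obs n_mis D"
    using d by (auto simp: pd_labels_def)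
  have "\<nu>_prior + real n_obs - 1 > 2" using \<nu>_prior by simp
  note r_moments = chi_squared_distributed_expectation_inverse[OF this U[OF d]]
  have r_meas: "r \<in> borel_measurable (Pi\<^sub>M {Uv d} (\<lambda>_. borel))"
    unfolding r_def by measurable
  note spread_moments = imputation_spread_expectation[OF d]
  have r_restrict: "r (restrict x {Uv d}) = r x" for x by (simp add: r_def)
  have spread_restrict: "imputation_spread n_obs n_mis d (restrict x ?B) = imputation_spread n_obs n_mis d x"
    for x by (rule imputation_spread_restrict) simp
  have r_int: "integrable M (\<lambda>\<omega>. r (\<lambda>l. X l \<omega>))" using r_moments(1) by (simp add: r_def)
  note r_spread = indep_vars_expectation_mult[OF indep sets(1-3) r_meas r_restrict
      measurable_imputation_spread spread_restrict r_int spread_moments(1)]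
  have g_meas: "g \<in> borel_measurable (Pi\<^sub>M ?C (\<lambda>_. borel))"
    unfolding g_def r_def
    by (intro borel_measurable_add borel_measurable_times borel_measurable_const
        borel_measurable_divide borel_measurable_abs measurable_component_singleton
        measurable_imputation_spread) auto
  have g_restrict: "g (restrict x ?C) = g x" for x
    unfolding g_def r_def by (subst imputation_spread_restrict) auto
  have g_int: "integrable M (\<lambda>\<omega>. g (\<lambda>l. X l \<omega>))"
    using r_spread(1) by (simp add: g_def)
  have g_expectation: "expectation (\<lambda>\<omega>. g (\<lambda>l. X l \<omega>)) = 1 + real n_mis / (real n_obs + \<nu>_prior - 3)"
    using r_spread r_moments spread_moments by (simp add: g_def r_def prob_space)
  note css_g = indep_vars_expectation_mult[OF indep sets(4-6) measurable_obs_css obs_css_restrict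
      g_meas g_restrict obs_css_expectation(1) g_int]
  have g: "g (\<lambda>l. X l \<omega>) = 1 + imputation_spread n_obs n_mis d (\<lambda>l. X l \<omega>) / \<bar>X (Uv d) \<omega>\<bar>" for \<omega>
    by (simp add: g_def r_def)
  show "integrable M (\<lambda>\<omega>. obs_css n_obs (\<lambda>l. X l \<omega>)
      * (1 + imputation_spread n_obs n_mis d (\<lambda>l. X l \<omega>) / \<bar>X (Uv d) \<omega>\<bar>))"
    and "expectation (\<lambda>\<omega>. obs_css n_obs (\<lambda>l. X l \<omega>)
      * (1 + imputation_spread n_obs n_mis d (\<lambda>l. X l \<omega>) / \<bar>X (Uv d) \<omega>\<bar>))
      = (real n_obs - 1) * \<sigma>\<^sup>2 * (1 + real n_mis / (real n_obs + \<nu>_prior - 3))"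
    using css_g g_expectation obs_css_expectation(2) by (simp_all add: g)
qed

end

theorem mainTheorem2:
  fixes M :: "'a measure" and X :: "rv_label \<Rightarrow> 'a \<Rightarrow> real"
    and n_obs n_mis D :: nat and \<mu> \<sigma> \<nu>_prior :: real
  assumes "prob_space M"
    and "n_obs \<ge> 2" and "n_mis \<ge> 1" and "D \<ge> 1"
    and "\<sigma> > 0"
    and "real n_obs + \<nu>_prior > 3"
    and "prob_space.indep_vars M (\<lambda>_. borel) X
           ({Yv i | i. i \<in> {1..n_obs}} \<union> {Uv d | d. d \<in> {1..D}} \<union> {ZPDv d | d. d \<in> {1..D}}
            \<union> {Zimpv i d | i d. i \<in> {n_obs+1..n_obs+n_mis} \<and> d \<in> {1..D}})"
    and "\<And>i. i \<in> {1..n_obs} \<Longrightarrow>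
           distributed M lborel (X (Yv i)) (\<lambda>y. ennreal (normal_density \<mu> \<sigma> y))"
    and "\<And>d. d \<in> {1..D} \<Longrightarrow>
           distributed M lborel (X (Uv d))
             (\<lambda>u. ennreal (chi_squared_density (\<nu>_prior + real n_obs - 1) u))"
    and "\<And>d. d \<in> {1..D} \<Longrightarrow>
           distributed M lborel (X (ZPDv d)) (\<lambda>z. ennreal (normal_density 0 (1 / sqrt (real n_obs)) z))"
    and "\<And>i d. i \<in> {n_obs+1..n_obs+n_mis} \<Longrightarrow> d \<in> {1..D} \<Longrightarrow>
           distributed M lborel (X (Zimpv i d)) (\<lambda>z. ennreal (normal_density 0 1 z))"
  shows "(\<integral>\<omega>. sigma2_MI_PD n_obs n_mis D (\<lambda>l. X l \<omega>) \<partial>M) - \<sigma>\<^sup>2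
         = - \<sigma>\<^sup>2 * (real n_mis * (\<nu>_prior - 2))
             / ((real (n_obs + n_mis) - 1) * (real n_obs + \<nu>_prior - 3))"
proof -
  interpret pd_imputation M X n_obs n_mis D \<mu> \<sigma> \<nu>_prior
    by (intro pd_imputation.intro pd_imputation_axioms.intro assms(1))
      (use assms in \<open>simp_all only: pd_labels_def\<close>)
  define c where "c = (real n_obs - 1) * \<sigma>\<^sup>2 * (1 + real n_mis / (real n_obs + \<nu>_prior - 3))
    / (real (n_obs + n_mis) - 1)"
  have "(\<integral>\<omega>. sigma2_MI_PD n_obs n_mis D (\<lambda>l. X l \<omega>) \<partial>M) = (\<Sum>d=1..D. c) / real D"
    using n_obs n_mis imputed_css_expectation
    by (simp add: sigma2_MI_PD_eq Bochner_Integration.integral_sum c_def)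
  also have "\<dots> = c" using \<open>D \<ge> 1\<close> by simp
  finally show ?thesis
    using n_obs \<nu>_prior by (simp add: c_def divide_simps) (simp add: algebra_simps)
qed

end
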